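(* Let $\mathcal{C}_1\xleftarrow{F}\mathcal{C}_{12}\xrightarrow{G}\mathcal{C}_2$ be a correspondence in $\mathrm{Cats}'$ such that $F$ is an equivalence, and let $F^{-1}$ be a quasi-inverse of $F$. The following are equivalent: (a) the correspondence is admissible; (b) the map $\mathrm{Ob}\,\mathcal{C}_{12}\to\{(c_1,c_2,\psi)\mid c_i\in\mathrm{Ob}\,\mathcal{C}_i,\ \psi:GF^{-1}(c_1)\xrightarrow{\sim}c_2\}$ is bijective. Here the map sends $c$ to $(F(c),G(c),\psi)$, where $\psi:GF^{-1}F(c)\xrightarrow{\sim}G(c)$ is induced by the isomorphism $F^{-1}F(c)\xrightarrow{\sim}c$; (c) the functor $H=(F,G):\mathcal{C}_{12}\to\mathcal{C}_1\times\mathcal{C}_2$ has the following property: for every $c\in\mathcal{C}_{12}$, every isomorphism in $\mathcal{C}_1\times\mathcal{C}_2$ with source $H(c)$ has one and only one lift to an isomorphism in $\mathcal{C}_{12}$ with source $c$.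
   Context: $\mathrm{Cats}'$ is the naive 1-category of small categories, whose morphisms are functors on the nose. A correspondence from $\mathcal{C}_1$ to $\mathcal{C}_2$ is a diagram $\mathcal{C}_1\xleftarrow{F}\mathcal{C}_{12}\xrightarrow{G}\mathcal{C}_2$ in $\mathrm{Cats}'$. A morphism of correspondences is a functor $H$ between middle terms with $F'H=F$, $G'H=G$ on the nose. For a functor $\Phi:\mathcal{C}_1\to\mathcal{C}_2$, $\mathrm{Graph}(\Phi)$ is the correspondence $\mathcal{C}_1\leftarrow\mathrm{Graph}_\Phi\to\mathcal{C}_2$. Here $\mathrm{Graph}_\Phi$ is the category of triples $(c_1,c_2,\psi)$ with $\psi:\Phi(c_1)\xrightarrow{\sim}c_2$, and the arrows are the projections. A correspondence is admissible if it is isomorphic (as a correspondence) to $\mathrm{Graph}(\Phi)$ for some functor $\Phi:\mathcal{C}_1\to\mathcal{C}_2$. *)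

theory Defs
  imports Main
begin

text \<open>A small category: object set, arrow set, domain, codomain, identities and
composition (Cmp C g f is g after f). Values of the operations outside the
carriers are irrelevant.\<close>

record ('o, 'a) cat =
  Obj :: "'o set"
  Arr :: "'a set"
  Dm  :: "'a \<Rightarrow> 'o"
  Cd  :: "'a \<Rightarrow> 'o"
  Idt :: "'o \<Rightarrow> 'a"
  Cmp :: "'a \<Rightarrow> 'a \<Rightarrow> 'a"

definition category :: "('o, 'a) cat \<Rightarrow> bool" where
  "category C \<longleftrightarrow>
     (\<forall>f\<in>Arr C. Dm C f \<in> Obj C \<and> Cd C f \<in> Obj C) \<and>
     (\<forall>x\<in>Obj C. Idt C x \<in> Arr C \<and> Dm C (Idt C x) = x \<and> Cd C (Idt C x) = x) \<and>
     (\<forall>f\<in>Arr C. \<forall>g\<in>Arr C. Cd C f = Dm C g \<longrightarrow>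
        Cmp C g f \<in> Arr C \<and> Dm C (Cmp C g f) = Dm C f \<and> Cd C (Cmp C g f) = Cd C g) \<and>
     (\<forall>f\<in>Arr C. Cmp C f (Idt C (Dm C f)) = f \<and> Cmp C (Idt C (Cd C f)) f = f) \<and>
     (\<forall>f\<in>Arr C. \<forall>g\<in>Arr C. \<forall>h\<in>Arr C. Cd C f = Dm C g \<longrightarrow> Cd C g = Dm C h \<longrightarrow>
        Cmp C h (Cmp C g f) = Cmp C (Cmp C h g) f)"

definition hom :: "('o, 'a) cat \<Rightarrow> 'o \<Rightarrow> 'o \<Rightarrow> 'a set" where
  "hom C x y = {f \<in> Arr C. Dm C f = x \<and> Cd C f = y}"

definition iso :: "('o, 'a) cat \<Rightarrow> 'a \<Rightarrow> bool" where
  "iso C f \<longleftrightarrow> f \<in> Arr C \<and>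
     (\<exists>g\<in>Arr C. Dm C g = Cd C f \<and> Cd C g = Dm C f \<and>
        Cmp C g f = Idt C (Dm C f) \<and> Cmp C f g = Idt C (Cd C f))"

record ('o, 'a, 'p, 'b) ftr =
  FO :: "'o \<Rightarrow> 'p"
  FA :: "'a \<Rightarrow> 'b"

definition "functor" :: "('o, 'a) cat \<Rightarrow> ('p, 'b) cat \<Rightarrow> ('o, 'a, 'p, 'b) ftr \<Rightarrow> bool" where
  "functor C D F \<longleftrightarrow> category C \<and> category D \<and>
     (\<forall>x\<in>Obj C. FO F x \<in> Obj D) \<and>
     (\<forall>f\<in>Arr C. FA F f \<in> Arr D \<and> Dm D (FA F f) = FO F (Dm C f) \<and> Cd D (FA F f) = FO F (Cd C f)) \<and>
     (\<forall>x\<in>Obj C. FA F (Idt C x) = Idt D (FO F x)) \<and>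
     (\<forall>f\<in>Arr C. \<forall>g\<in>Arr C. Cd C f = Dm C g \<longrightarrow> FA F (Cmp C g f) = Cmp D (FA F g) (FA F f))"

definition fcomp :: "('p, 'b, 'q, 'c) ftr \<Rightarrow> ('o, 'a, 'p, 'b) ftr \<Rightarrow> ('o, 'a, 'q, 'c) ftr" where
  "fcomp G F = \<lparr>FO = FO G \<circ> FO F, FA = FA G \<circ> FA F\<rparr>"

definition fid :: "('o, 'a, 'o, 'a) ftr" where
  "fid = \<lparr>FO = id, FA = id\<rparr>"

definition feq :: "('o, 'a) cat \<Rightarrow> ('o, 'a, 'p, 'b) ftr \<Rightarrow> ('o, 'a, 'p, 'b) ftr \<Rightarrow> bool" where
  "feq C F G \<longleftrightarrow> (\<forall>x\<in>Obj C. FO F x = FO G x) \<and> (\<forall>f\<in>Arr C. FA F f = FA G f)"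

definition nat_iso :: "('o, 'a) cat \<Rightarrow> ('p, 'b) cat \<Rightarrow> ('o, 'a, 'p, 'b) ftr \<Rightarrow>
    ('o, 'a, 'p, 'b) ftr \<Rightarrow> ('o \<Rightarrow> 'b) \<Rightarrow> bool" where
  "nat_iso C D F G \<eta> \<longleftrightarrow> functor C D F \<and> functor C D G \<and>
     (\<forall>x\<in>Obj C. \<eta> x \<in> hom D (FO F x) (FO G x) \<and> iso D (\<eta> x)) \<and>
     (\<forall>f\<in>Arr C. Cmp D (\<eta> (Cd C f)) (FA F f) = Cmp D (FA G f) (\<eta> (Dm C f)))"

definition quasi_inverse :: "('o, 'a) cat \<Rightarrow> ('p, 'b) cat \<Rightarrow> ('o, 'a, 'p, 'b) ftr \<Rightarrow>
    ('p, 'b, 'o, 'a) ftr \<Rightarrow> ('o \<Rightarrow> 'a) \<Rightarrow> ('p \<Rightarrow> 'b) \<Rightarrow> bool" where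
  "quasi_inverse C D F Finv \<eta> \<epsilon> \<longleftrightarrow> functor C D F \<and> functor D C Finv \<and>
     nat_iso C C (fcomp Finv F) fid \<eta> \<and> nat_iso D D (fcomp F Finv) fid \<epsilon>"

definition equivalence :: "('o, 'a) cat \<Rightarrow> ('p, 'b) cat \<Rightarrow> ('o, 'a, 'p, 'b) ftr \<Rightarrow> bool" where
  "equivalence C D F \<longleftrightarrow> (\<exists>Finv \<eta> \<epsilon>. quasi_inverse C D F Finv \<eta> \<epsilon>)"

definition product_cat :: "('o, 'a) cat \<Rightarrow> ('p, 'b) cat \<Rightarrow> ('o \<times> 'p, 'a \<times> 'b) cat" where
  "product_cat C D = \<lparr>Obj = Obj C \<times> Obj D, Arr = Arr C \<times> Arr D,
     Dm = (\<lambda>(f, g). (Dm C f, Dm D g)), Cd = (\<lambda>(f, g). (Cd C f, Cd D g)),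
     Idt = (\<lambda>(x, y). (Idt C x, Idt D y)),
     Cmp = (\<lambda>(f', g') (f, g). (Cmp C f' f, Cmp D g' g))\<rparr>"

definition pair_ftr :: "('o, 'a, 'p, 'b) ftr \<Rightarrow> ('o, 'a, 'q, 'c) ftr \<Rightarrow> ('o, 'a, 'p \<times> 'q, 'b \<times> 'c) ftr" where
  "pair_ftr F G = \<lparr>FO = (\<lambda>x. (FO F x, FO G x)), FA = (\<lambda>f. (FA F f, FA G f))\<rparr>"

text \<open>Arrows: (source, target, f1, f2) with f1 : c1 \<rightarrow> c1', f2 : c2 \<rightarrow> c2' and
  psi' \<circ> Phi(f1) = f2 \<circ> psi.\<close>

definition graph_obj :: "('o1, 'a1) cat \<Rightarrow> ('o2, 'a2) cat \<Rightarrow> ('o1, 'a1, 'o2, 'a2) ftr \<Rightarrow>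
    ('o1 \<times> 'o2 \<times> 'a2) set" where
  "graph_obj C1 C2 \<Phi> = {(c1, c2, \<psi>). c1 \<in> Obj C1 \<and> c2 \<in> Obj C2 \<and>
      \<psi> \<in> hom C2 (FO \<Phi> c1) c2 \<and> iso C2 \<psi>}"

definition graph_cat :: "('o1, 'a1) cat \<Rightarrow> ('o2, 'a2) cat \<Rightarrow> ('o1, 'a1, 'o2, 'a2) ftr \<Rightarrow>
    ('o1 \<times> 'o2 \<times> 'a2,
     ('o1 \<times> 'o2 \<times> 'a2) \<times> ('o1 \<times> 'o2 \<times> 'a2) \<times> 'a1 \<times> 'a2) cat" where
  "graph_cat C1 C2 \<Phi> = \<lparr>
     Obj = graph_obj C1 C2 \<Phi>,
     Arr = {((c1, c2, \<psi>), (d1, d2, \<chi>), f1, f2).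
              (c1, c2, \<psi>) \<in> graph_obj C1 C2 \<Phi> \<and> (d1, d2, \<chi>) \<in> graph_obj C1 C2 \<Phi> \<and>
              f1 \<in> hom C1 c1 d1 \<and> f2 \<in> hom C2 c2 d2 \<and>
              Cmp C2 \<chi> (FA \<Phi> f1) = Cmp C2 f2 \<psi>},
     Dm = (\<lambda>(x, y, f1, f2). x),
     Cd = (\<lambda>(x, y, f1, f2). y),
     Idt = (\<lambda>(c1, c2, \<psi>). ((c1, c2, \<psi>), (c1, c2, \<psi>), Idt C1 c1, Idt C2 c2)),
     Cmp = (\<lambda>(y', z, g1, g2) (x, y, f1, f2). (x, z, Cmp C1 g1 f1, Cmp C2 g2 f2)) \<rparr>"

definition graph_p1 :: "('o1 \<times> 'o2 \<times> 'a2, ('o1 \<times> 'o2 \<times> 'a2) \<times> ('o1 \<times> 'o2 \<times> 'a2) \<times> 'a1 \<times> 'a2, 'o1, 'a1) ftr" where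
  "graph_p1 = \<lparr>FO = (\<lambda>(c1, c2, \<psi>). c1), FA = (\<lambda>(x, y, f1, f2). f1)\<rparr>"

definition graph_p2 :: "('o1 \<times> 'o2 \<times> 'a2, ('o1 \<times> 'o2 \<times> 'a2) \<times> ('o1 \<times> 'o2 \<times> 'a2) \<times> 'a1 \<times> 'a2, 'o2, 'a2) ftr" where
  "graph_p2 = \<lparr>FO = (\<lambda>(c1, c2, \<psi>). c2), FA = (\<lambda>(x, y, f1, f2). f2)\<rparr>"

definition corr_iso ::
  "('o, 'a) cat \<Rightarrow> ('o', 'a') cat \<Rightarrow>
   ('o, 'a, 'o1, 'a1) ftr \<Rightarrow> ('o, 'a, 'o2, 'a2) ftr \<Rightarrow>
   ('o', 'a', 'o1, 'a1) ftr \<Rightarrow> ('o', 'a', 'o2, 'a2) ftr \<Rightarrow>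
   ('o, 'a, 'o', 'a') ftr \<Rightarrow> bool" where
  "corr_iso C12 C12' F G F' G' K \<longleftrightarrow> functor C12 C12' K \<and>
     (\<exists>K'. functor C12' C12 K' \<and> feq C12 (fcomp K' K) fid \<and> feq C12' (fcomp K K') fid) \<and>
     feq C12 (fcomp F' K) F \<and> feq C12 (fcomp G' K) G"

definition admissible ::
  "('o1, 'a1) cat \<Rightarrow> ('o2, 'a2) cat \<Rightarrow> ('o, 'a) cat \<Rightarrow>
   ('o, 'a, 'o1, 'a1) ftr \<Rightarrow> ('o, 'a, 'o2, 'a2) ftr \<Rightarrow> bool" where
  "admissible C1 C2 C12 F G \<longleftrightarrow>
     (\<exists>\<Phi>. functor C1 C2 \<Phi> \<and>
        (\<exists>K. corr_iso C12 (graph_cat C1 C2 \<Phi>) F G graph_p1 graph_p2 K))"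

end

theory Submission
  imports Defs
begin

text \<open>
  (a) \<Longrightarrow> (c): along the projection to \<open>C1 \<times> C2\<close>, the graph of any functor \<open>\<Phi>\<close> has unique lifts
  of isomorphisms, since the lift of \<open>(u1, u2)\<close> at \<open>(c1, c2, \<psi>)\<close> is forced to end at
  \<open>(d1, d2, u2 \<psi> \<Phi>(u1)\<inverse>)\<close>; and this property is invariant under isomorphism of correspondences.

  (c) \<Longrightarrow> (b): two objects with the same image are joined by an isomorphism lying over identities,
  which uniqueness of lifts forces to be an identity. A triple \<open>(c1, c2, \<psi>)\<close> is hit by the target
  of the lift, starting at \<open>Finv c1\<close>, of \<open>\<epsilon> c1\<close> paired with a suitable isomorphism built from \<open>\<psi>\<close>.

  (b) \<Longrightarrow> (a): \<open>c \<mapsto> (F c, G c, G (\<eta> c))\<close> is the object map of a functor from \<open>C12\<close> to the graph of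
  \<open>G \<circ> Finv\<close> commuting with the legs. It is fully faithful because \<open>F\<close> is, so when it is bijective
  on objects it is an isomorphism of correspondences.
\<close>

context
  fixes C :: "('o, 'a) cat"
  assumes C: "category C"
begin

lemma Dm_in_Obj [simp]: "f \<in> Arr C \<Longrightarrow> Dm C f \<in> Obj C"
  and Cd_in_Obj [simp]: "f \<in> Arr C \<Longrightarrow> Cd C f \<in> Obj C"
  and Idt_in_Arr [simp]: "x \<in> Obj C \<Longrightarrow> Idt C x \<in> Arr C"
  and Dm_Idt [simp]: "x \<in> Obj C \<Longrightarrow> Dm C (Idt C x) = x"
  and Cd_Idt [simp]: "x \<in> Obj C \<Longrightarrow> Cd C (Idt C x) = x"
  and Cmp_in_Arr [simp]: "f \<in> Arr C \<Longrightarrow> g \<in> Arr C \<Longrightarrow> Cd C f = Dm C g \<Longrightarrow> Cmp C g f \<in> Arr C"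
  and Dm_Cmp [simp]: "f \<in> Arr C \<Longrightarrow> g \<in> Arr C \<Longrightarrow> Cd C f = Dm C g \<Longrightarrow> Dm C (Cmp C g f) = Dm C f"
  and Cd_Cmp [simp]: "f \<in> Arr C \<Longrightarrow> g \<in> Arr C \<Longrightarrow> Cd C f = Dm C g \<Longrightarrow> Cd C (Cmp C g f) = Cd C g"
  and Cmp_Idt_right [simp]: "f \<in> Arr C \<Longrightarrow> x = Dm C f \<Longrightarrow> Cmp C f (Idt C x) = f"
  and Cmp_Idt_left [simp]: "f \<in> Arr C \<Longrightarrow> x = Cd C f \<Longrightarrow> Cmp C (Idt C x) f = f"
  and Cmp_assoc: "f \<in> Arr C \<Longrightarrow> g \<in> Arr C \<Longrightarrow> h \<in> Arr C \<Longrightarrow> Cd C f = Dm C g \<Longrightarrow>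
      Cd C g = Dm C h \<Longrightarrow> Cmp C h (Cmp C g f) = Cmp C (Cmp C h g) f"
  using C unfolding category_def by auto

end

definition inv_arr :: "('o, 'a) cat \<Rightarrow> 'a \<Rightarrow> 'a" where
  "inv_arr C f = (SOME g. g \<in> Arr C \<and> Dm C g = Cd C f \<and> Cd C g = Dm C f \<and>
      Cmp C g f = Idt C (Dm C f) \<and> Cmp C f g = Idt C (Cd C f))"

lemma iso_in_Arr [simp]: "iso C f \<Longrightarrow> f \<in> Arr C"
  unfolding iso_def by blast

lemma
  assumes "iso C f"
  shows inv_arr_in_Arr [simp]: "inv_arr C f \<in> Arr C"
    and Dm_inv_arr [simp]: "Dm C (inv_arr C f) = Cd C f"
    and Cd_inv_arr [simp]: "Cd C (inv_arr C f) = Dm C f"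
    and Cmp_inv_arr_left [simp]: "Cmp C (inv_arr C f) f = Idt C (Dm C f)"
    and Cmp_inv_arr_right [simp]: "Cmp C f (inv_arr C f) = Idt C (Cd C f)"
proof -
  have "\<exists>g. g \<in> Arr C \<and> Dm C g = Cd C f \<and> Cd C g = Dm C f \<and>
      Cmp C g f = Idt C (Dm C f) \<and> Cmp C f g = Idt C (Cd C f)"
    using assms unfolding iso_def by blast
  from someI_ex[OF this] show "inv_arr C f \<in> Arr C" "Dm C (inv_arr C f) = Cd C f"
    "Cd C (inv_arr C f) = Dm C f" "Cmp C (inv_arr C f) f = Idt C (Dm C f)"
    "Cmp C f (inv_arr C f) = Idt C (Cd C f)"
    unfolding inv_arr_def by blast+
qed

context
  fixes C :: "('o, 'a) cat"
  assumes C: "category C"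
begin

lemma iso_Idt [simp]: "x \<in> Obj C \<Longrightarrow> iso C (Idt C x)"
  unfolding iso_def using C by (intro conjI bexI[of _ "Idt C x"]) simp_all

lemma iso_inv_arr [simp]: "iso C f \<Longrightarrow> iso C (inv_arr C f)"
  unfolding iso_def[of _ "inv_arr C f"] by (intro conjI bexI[of _ f]) simp_all

lemma inv_arr_unique:
  assumes f: "iso C f" and g: "g \<in> Arr C" "Dm C g = Cd C f" and inv: "Cmp C g f = Idt C (Dm C f)"
  shows "g = inv_arr C f"
proof -
  have "g = Cmp C g (Cmp C f (inv_arr C f))"
    using C f g by simp
  also have "\<dots> = Cmp C (Cmp C g f) (inv_arr C f)"
    using f g by (intro Cmp_assoc[OF C]) simp_all
  also have "\<dots> = inv_arr C f"
    using C f by (simp add: inv)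
  finally show ?thesis .
qed

lemma iso_cancel_right:
  assumes e: "iso C e" and gh: "g \<in> Arr C" "h \<in> Arr C" "Dm C g = Cd C e" "Dm C h = Cd C e"
    and eq: "Cmp C g e = Cmp C h e"
  shows "g = h"
proof -
  have "g = Cmp C (Cmp C g e) (inv_arr C e)"
    using C e gh by (simp flip: Cmp_assoc[OF C])
  also have "\<dots> = h"
    using C e gh by (simp add: eq flip: Cmp_assoc[OF C])
  finally show ?thesis .
qed

lemma iso_cancel_left:
  assumes m: "iso C m" and gh: "g \<in> Arr C" "h \<in> Arr C" "Cd C g = Dm C m" "Cd C h = Dm C m"
    and eq: "Cmp C m g = Cmp C m h"
  shows "g = h"
proof -
  have "g = Cmp C (inv_arr C m) (Cmp C m g)"
    using C m gh by (simp add: Cmp_assoc[OF C])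
  also have "\<dots> = h"
    using C m gh by (simp add: eq Cmp_assoc[OF C])
  finally show ?thesis .
qed

lemma Cmp_inv_arr_cancel [simp]:
  assumes "iso C k" "x \<in> Arr C" "Dm C x = Dm C k"
  shows "Cmp C (Cmp C x (inv_arr C k)) k = x"
  using C assms by (simp flip: Cmp_assoc[OF C])

lemma Cmp_cancel_inv_arr [simp]:
  assumes "iso C k" "x \<in> Arr C" "Dm C x = Cd C k"
  shows "Cmp C (Cmp C x k) (inv_arr C k) = x"
  using C assms by (simp flip: Cmp_assoc[OF C])

lemma iso_Cmp:
  assumes f: "iso C f" and g: "iso C g" and fg: "Cd C f = Dm C g"
  shows "iso C (Cmp C g f)"
proof -
  let ?k = "Cmp C (inv_arr C f) (inv_arr C g)"
  have "Cmp C ?k (Cmp C g f) = Cmp C (inv_arr C f) (Cmp C (Cmp C (inv_arr C g) g) f)"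
    using C f g fg by (simp add: Cmp_assoc[OF C])
  then have left: "Cmp C ?k (Cmp C g f) = Idt C (Dm C f)"
    using C f g fg by simp
  have "Cmp C (Cmp C g f) ?k = Cmp C g (Cmp C (Cmp C f (inv_arr C f)) (inv_arr C g))"
    using C f g fg by (simp add: Cmp_assoc[OF C])
  then have right: "Cmp C (Cmp C g f) ?k = Idt C (Cd C g)"
    using C f g fg by simp
  show ?thesis
    unfolding iso_def[of _ "Cmp C g f"] using C f g fg left right
    by (intro conjI bexI[of _ ?k]) simp_all
qed

lemma comm_square_inv:
  assumes a: "iso C a" and b: "iso C b" and \<psi>: "\<psi> \<in> Arr C" "Dm C \<psi> = Dm C a" "Cd C \<psi> = Dm C b"
    and \<chi>: "\<chi> \<in> Arr C" "Dm C \<chi> = Cd C a" "Cd C \<chi> = Cd C b"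
    and square: "Cmp C \<chi> a = Cmp C b \<psi>"
  shows "Cmp C \<psi> (inv_arr C a) = Cmp C (inv_arr C b) \<chi>"
proof -
  have "Cmp C \<psi> (inv_arr C a) = Cmp C (inv_arr C b) (Cmp C (Cmp C b \<psi>) (inv_arr C a))"
    using C a b \<psi> by (simp add: Cmp_assoc[OF C])
  also have "\<dots> = Cmp C (inv_arr C b) \<chi>"
    using C a \<chi> by (simp flip: square)
  finally show ?thesis .
qed

lemma comm_square_paste:
  assumes arrs: "a1 \<in> Arr C" "a2 \<in> Arr C" "b1 \<in> Arr C" "b2 \<in> Arr C"
      "\<psi> \<in> Arr C" "\<chi> \<in> Arr C" "\<omega> \<in> Arr C"
    and dms: "Cd C a1 = Dm C a2" "Cd C b1 = Dm C b2" "Dm C \<chi> = Cd C a1" "Cd C \<chi> = Dm C b2"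
      "Dm C \<omega> = Cd C a2" "Cd C \<psi> = Dm C b1"
    and sq1: "Cmp C \<chi> a1 = Cmp C b1 \<psi>" and sq2: "Cmp C \<omega> a2 = Cmp C b2 \<chi>"
  shows "Cmp C \<omega> (Cmp C a2 a1) = Cmp C (Cmp C b2 b1) \<psi>"
proof -
  have "Cmp C \<omega> (Cmp C a2 a1) = Cmp C (Cmp C b2 \<chi>) a1"
    using arrs dms by (simp add: Cmp_assoc[OF C] flip: sq2)
  also have "\<dots> = Cmp C b2 (Cmp C b1 \<psi>)"
    using C arrs dms by (simp flip: Cmp_assoc[OF C] sq1)
  also have "\<dots> = Cmp C (Cmp C b2 b1) \<psi>"
    using arrs dms by (simp add: Cmp_assoc[OF C])
  finally show ?thesis .
qed

end

lemma fcomp_simps [simp]: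
  "FO (fcomp G F) x = FO G (FO F x)" "FA (fcomp G F) f = FA G (FA F f)"
  by (simp_all add: fcomp_def)

lemma fid_simps [simp]: "FO fid x = x" "FA fid f = f"
  by (simp_all add: fid_def)

context
  fixes C :: "('o, 'a) cat" and D :: "('p, 'b) cat" and K :: "('o, 'a, 'p, 'b) ftr"
  assumes K: "functor C D K"
begin

lemma functor_dom_category: "category C"
  and functor_cod_category: "category D"
  and FO_in_Obj [simp]: "x \<in> Obj C \<Longrightarrow> FO K x \<in> Obj D"
  and FA_in_Arr [simp]: "f \<in> Arr C \<Longrightarrow> FA K f \<in> Arr D"
  and Dm_FA [simp]: "f \<in> Arr C \<Longrightarrow> Dm D (FA K f) = FO K (Dm C f)"
  and Cd_FA [simp]: "f \<in> Arr C \<Longrightarrow> Cd D (FA K f) = FO K (Cd C f)"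
  and FA_Idt [simp]: "x \<in> Obj C \<Longrightarrow> FA K (Idt C x) = Idt D (FO K x)"
  and FA_Cmp: "f \<in> Arr C \<Longrightarrow> g \<in> Arr C \<Longrightarrow> Cd C f = Dm C g \<Longrightarrow>
      FA K (Cmp C g f) = Cmp D (FA K g) (FA K f)"
  using K unfolding functor_def by auto

lemma functor_iso [simp]:
  assumes f: "iso C f"
  shows "iso D (FA K f)"
proof -
  have "Cmp D (FA K (inv_arr C f)) (FA K f) = Idt D (Dm D (FA K f))"
    "Cmp D (FA K f) (FA K (inv_arr C f)) = Idt D (Cd D (FA K f))"
    using functor_dom_category f by (simp_all flip: FA_Cmp)
  then show ?thesis
    unfolding iso_def using functor_dom_category f
    by (intro conjI bexI[of _ "FA K (inv_arr C f)"]) simp_all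
qed

lemma functor_inv_arr:
  assumes f: "iso C f"
  shows "FA K (inv_arr C f) = inv_arr D (FA K f)"
  using functor_dom_category functor_cod_category f
  by (intro inv_arr_unique) (simp_all flip: FA_Cmp)

end

lemma functor_fcomp: "functor C D F \<Longrightarrow> functor D E G \<Longrightarrow> functor C E (fcomp G F)"
  unfolding functor_def by auto

definition faithful :: "('o, 'a) cat \<Rightarrow> ('o, 'a, 'p, 'b) ftr \<Rightarrow> bool" where
  "faithful C K \<longleftrightarrow> (\<forall>f\<in>Arr C. \<forall>g\<in>Arr C.
     Dm C f = Dm C g \<longrightarrow> Cd C f = Cd C g \<longrightarrow> FA K f = FA K g \<longrightarrow> f = g)"

definition full :: "('o, 'a) cat \<Rightarrow> ('p, 'b) cat \<Rightarrow> ('o, 'a, 'p, 'b) ftr \<Rightarrow> bool" where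
  "full C D K \<longleftrightarrow> (\<forall>c\<in>Obj C. \<forall>d\<in>Obj C. \<forall>a\<in>hom D (FO K c) (FO K d).
     \<exists>f\<in>hom C c d. FA K f = a)"

lemma faithfulD:
  "faithful C K \<Longrightarrow> f \<in> Arr C \<Longrightarrow> g \<in> Arr C \<Longrightarrow> Dm C f = Dm C g \<Longrightarrow> Cd C f = Cd C g \<Longrightarrow>
    FA K f = FA K g \<Longrightarrow> f = g"
  unfolding faithful_def by blast

lemma fullE:
  assumes "full C D K" "c \<in> Obj C" "d \<in> Obj C"
    and "a \<in> Arr D" "Dm D a = FO K c" "Cd D a = FO K d"
  obtains f where "f \<in> Arr C" "Dm C f = c" "Cd C f = d" "FA K f = a"
  using assms unfolding full_def hom_def by blast

lemma fully_faithful_reflects_iso: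
  assumes K: "functor C D K" "full C D K" "faithful C K"
    and f: "f \<in> Arr C" "iso D (FA K f)"
  shows "iso C f"
proof -
  have C: "category C" and D: "category D"
    using K(1) by (rule functor_dom_category, rule functor_cod_category)
  obtain g where g: "g \<in> Arr C" "Dm C g = Cd C f" "Cd C g = Dm C f"
      and Kg: "FA K g = inv_arr D (FA K f)"
    using K f C by (elim fullE[of C D K "Cd C f" "Dm C f" "inv_arr D (FA K f)"]) simp_all
  have "Cmp C g f = Idt C (Dm C f)" "Cmp C f g = Idt C (Cd C f)"
    by (rule faithfulD[OF K(3)]; use C D K f g in \<open>simp add: FA_Cmp Kg\<close>)+
  then show ?thesis
    unfolding iso_def using f g by blast
qed

lemma bij_Arr_if_fully_faithful:
  assumes K: "functor C D K" "full C D K" "faithful C K"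
    and obj: "bij_betw (FO K) (Obj C) (Obj D)"
  shows "bij_betw (FA K) (Arr C) (Arr D)"
proof -
  have C: "category C" and D: "category D"
    using K(1) by (rule functor_dom_category, rule functor_cod_category)
  have "inj_on (FA K) (Arr C)"
  proof (rule inj_onI)
    fix f g assume fg: "f \<in> Arr C" "g \<in> Arr C" "FA K f = FA K g"
    then have "FO K (Dm C f) = FO K (Dm C g)" "FO K (Cd C f) = FO K (Cd C g)"
      using K(1) by (simp_all flip: Dm_FA Cd_FA)
    then have "Dm C f = Dm C g" "Cd C f = Cd C g"
      using obj fg C unfolding bij_betw_def inj_on_def by simp_all
    then show "f = g"
      using K(3) fg by (blast intro: faithfulD)
  qed
  moreover have "a \<in> FA K ` Arr C" if a: "a \<in> Arr D" for a
  proof -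
    have "Dm D a \<in> FO K ` Obj C" "Cd D a \<in> FO K ` Obj C"
      using obj a D unfolding bij_betw_def by simp_all
    then obtain c d where "c \<in> Obj C" "d \<in> Obj C" "Dm D a = FO K c" "Cd D a = FO K d"
      by blast
    with K(2) a obtain f where "f \<in> Arr C" "FA K f = a"
      by (elim fullE)
    then show ?thesis
      by blast
  qed
  ultimately show ?thesis
    using K(1) unfolding bij_betw_def by auto
qed

definition inv_ftr :: "('o, 'a) cat \<Rightarrow> ('o, 'a, 'p, 'b) ftr \<Rightarrow> ('p, 'b, 'o, 'a) ftr" where
  "inv_ftr C K = \<lparr>FO = the_inv_into (Obj C) (FO K), FA = the_inv_into (Arr C) (FA K)\<rparr>"

context
  fixes C :: "('o, 'a) cat" and D :: "('p, 'b) cat" and K :: "('o, 'a, 'p, 'b) ftr"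
  assumes obj: "bij_betw (FO K) (Obj C) (Obj D)" and arr: "bij_betw (FA K) (Arr C) (Arr D)"
begin

lemma inv_ftr_simps [simp]:
  "y \<in> Obj D \<Longrightarrow> FO (inv_ftr C K) y \<in> Obj C" "y \<in> Obj D \<Longrightarrow> FO K (FO (inv_ftr C K) y) = y"
  "x \<in> Obj C \<Longrightarrow> FO (inv_ftr C K) (FO K x) = x"
  "g \<in> Arr D \<Longrightarrow> FA (inv_ftr C K) g \<in> Arr C" "g \<in> Arr D \<Longrightarrow> FA K (FA (inv_ftr C K) g) = g"
  "f \<in> Arr C \<Longrightarrow> FA (inv_ftr C K) (FA K f) = f"
  using obj arr unfolding inv_ftr_def bij_betw_def
  by (auto intro: the_inv_into_into f_the_inv_into_f the_inv_into_f_f)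

lemma inv_ftr_inverse: "feq C (fcomp (inv_ftr C K) K) fid" "feq D (fcomp K (inv_ftr C K)) fid"
  unfolding feq_def by simp_all

lemma functor_inv_ftr:
  assumes K: "functor C D K"
  shows "functor D C (inv_ftr C K)"
proof -
  have C: "category C" and D: "category D"
    using K by (rule functor_dom_category, rule functor_cod_category)
  let ?K' = "inv_ftr C K"
  have dom: "Dm C (FA ?K' g) = FO ?K' (Dm D g)" and cod: "Cd C (FA ?K' g) = FO ?K' (Cd D g)"
    if g: "g \<in> Arr D" for g
  proof -
    have "Dm D g = FO K (Dm C (FA ?K' g))" "Cd D g = FO K (Cd C (FA ?K' g))"
      using Dm_FA[OF K, of "FA ?K' g"] Cd_FA[OF K, of "FA ?K' g"] g by simp_all
    then show "Dm C (FA ?K' g) = FO ?K' (Dm D g)" "Cd C (FA ?K' g) = FO ?K' (Cd D g)"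
      using C g by simp_all
  qed
  show ?thesis
    unfolding functor_def
  proof (intro conjI ballI impI C D)
    fix y assume y: "y \<in> Obj D"
    then have "Idt D y = FA K (Idt C (FO ?K' y))"
      using K by simp
    then show "FA ?K' (Idt D y) = Idt C (FO ?K' y)"
      using C y by simp
  next
    fix f g assume fg: "f \<in> Arr D" "g \<in> Arr D" "Cd D f = Dm D g"
    then have "Cmp D g f = FA K (Cmp C (FA ?K' g) (FA ?K' f))"
      using K dom cod by (simp add: FA_Cmp)
    then show "FA ?K' (Cmp D g f) = Cmp C (FA ?K' g) (FA ?K' f)"
      using fg dom cod C by simp
  qed (simp_all add: dom cod)
qed

end

lemma quasi_inverse_sym:
  "quasi_inverse C D F Finv \<eta> \<epsilon> \<Longrightarrow> quasi_inverse D C Finv F \<epsilon> \<eta>"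
  unfolding quasi_inverse_def by blast

context
  fixes C :: "('o, 'a) cat" and D :: "('p, 'b) cat" and F :: "('o, 'a, 'p, 'b) ftr"
    and Finv :: "('p, 'b, 'o, 'a) ftr" and \<eta> :: "'o \<Rightarrow> 'a" and \<epsilon> :: "'p \<Rightarrow> 'b"
  assumes qi: "quasi_inverse C D F Finv \<eta> \<epsilon>"
begin

lemma quasi_inverse_functor: "functor C D F" "functor D C Finv"
  using qi unfolding quasi_inverse_def by blast+

lemma quasi_inverse_unit:
  assumes "x \<in> Obj C"
  shows "\<eta> x \<in> Arr C" "Dm C (\<eta> x) = FO Finv (FO F x)" "Cd C (\<eta> x) = x" "iso C (\<eta> x)"
  using qi assms unfolding quasi_inverse_def nat_iso_def hom_def by auto

lemma quasi_inverse_unit_natural: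
  "f \<in> Arr C \<Longrightarrow> Cmp C (\<eta> (Cd C f)) (FA Finv (FA F f)) = Cmp C f (\<eta> (Dm C f))"
  using qi unfolding quasi_inverse_def nat_iso_def by auto

lemma quasi_inverse_faithful: "faithful C F"
  unfolding faithful_def
proof (intro ballI impI)
  fix f g assume fg: "f \<in> Arr C" "g \<in> Arr C" "Dm C f = Dm C g" "Cd C f = Cd C g" "FA F f = FA F g"
  have C: "category C"
    using quasi_inverse_functor(1) by (rule functor_dom_category)
  have "Cmp C f (\<eta> (Dm C f)) = Cmp C g (\<eta> (Dm C f))"
    using fg quasi_inverse_unit_natural by metis
  then show "f = g"
    by (rule iso_cancel_right[OF C, rotated -1]) (use fg C quasi_inverse_unit in simp_all)
qed

end

lemma quasi_inverse_full:
  assumes qi: "quasi_inverse C D F Finv \<eta> \<epsilon>"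
  shows "full C D F"
  unfolding full_def hom_def
proof (intro ballI bexI)
  fix c d a assume cd: "c \<in> Obj C" "d \<in> Obj C"
    and a: "a \<in> {a \<in> Arr D. Dm D a = FO F c \<and> Cd D a = FO F d}"
  note F = quasi_inverse_functor[OF qi] and \<eta> = quasi_inverse_unit[OF qi]
  have C: "category C"
    using F(1) by (rule functor_dom_category)
  define f where "f = Cmp C (\<eta> d) (Cmp C (FA Finv a) (inv_arr C (\<eta> c)))"
  show f: "f \<in> {f \<in> Arr C. Dm C f = c \<and> Cd C f = d}"
    unfolding f_def using C F cd a \<eta> by simp
  have "Cmp C (\<eta> d) (FA Finv (FA F f)) = Cmp C f (\<eta> c)"
    using quasi_inverse_unit_natural[OF qi] f by fastforce
  also have "\<dots> = Cmp C (\<eta> d) (FA Finv a)"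
    unfolding f_def using C F cd a \<eta> by (simp flip: Cmp_assoc)
  finally have "FA Finv (FA F f) = FA Finv a"
    by (rule iso_cancel_left[OF C, rotated -1]) (use C F cd a f \<eta> in simp_all)
  then show "FA F f = a"
    by (rule faithfulD[OF quasi_inverse_faithful[OF quasi_inverse_sym[OF qi]], rotated -1])
      (use F a f in simp_all)
qed

section \<open>Unique lifting of isomorphisms\<close>

lemma iso_product_cat: "iso (product_cat C1 C2) (u1, u2) \<longleftrightarrow> iso C1 u1 \<and> iso C2 u2"
  unfolding iso_def product_cat_def by auto

lemma Dm_product_cat: "Dm (product_cat C1 C2) (u1, u2) = (Dm C1 u1, Dm C2 u2)"
  unfolding product_cat_def by simp

definition unique_iso_lifting :: "('o, 'a) cat \<Rightarrow> ('p, 'b) cat \<Rightarrow> ('o, 'a, 'p, 'b) ftr \<Rightarrow> bool" where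
  "unique_iso_lifting C B P \<longleftrightarrow>
     (\<forall>c\<in>Obj C. \<forall>u. iso B u \<and> Dm B u = FO P c \<longrightarrow> (\<exists>!h. iso C h \<and> Dm C h = c \<and> FA P h = u))"

lemma unique_iso_lifting_pair_iff:
  "unique_iso_lifting C (product_cat C1 C2) (pair_ftr F G) \<longleftrightarrow>
    (\<forall>c\<in>Obj C. \<forall>u1 u2. iso C1 u1 \<and> iso C2 u2 \<and> Dm C1 u1 = FO F c \<and> Dm C2 u2 = FO G c \<longrightarrow>
      (\<exists>!h. iso C h \<and> Dm C h = c \<and> FA F h = u1 \<and> FA G h = u2))"
  unfolding unique_iso_lifting_def
  by (simp add: iso_product_cat Dm_product_cat pair_ftr_def)

lemma feqD:
  "feq C F G \<Longrightarrow> x \<in> Obj C \<Longrightarrow> FO F x = FO G x"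
  "feq C F G \<Longrightarrow> f \<in> Arr C \<Longrightarrow> FA F f = FA G f"
  unfolding feq_def by blast+

lemma unique_iso_lifting_transfer:
  assumes K: "functor C D K" and K': "functor D C K'"
    and inv: "feq C (fcomp K' K) fid" "feq D (fcomp K K') fid"
    and PK: "feq C (fcomp P K) Q" and lift: "unique_iso_lifting D B P"
  shows "unique_iso_lifting C B Q"
  unfolding unique_iso_lifting_def
proof (intro ballI allI impI)
  fix c u assume c: "c \<in> Obj C" and u: "iso B u \<and> Dm B u = FO Q c"
  note inv_simps = feqD[OF inv(1), simplified] feqD[OF inv(2), simplified]
    and PK_simps = feqD[OF PK, simplified]
  have "\<exists>!g. iso D g \<and> Dm D g = FO K c \<and> FA P g = u"
    using lift K c u PK_simps unfolding unique_iso_lifting_def by simp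
  then obtain g where g: "iso D g" "Dm D g = FO K c" "FA P g = u"
    and g_unique: "\<And>g'. iso D g' \<and> Dm D g' = FO K c \<and> FA P g' = u \<Longrightarrow> g' = g"
    by blast
  show "\<exists>!h. iso C h \<and> Dm C h = c \<and> FA Q h = u"
  proof
    show "iso C (FA K' g) \<and> Dm C (FA K' g) = c \<and> FA Q (FA K' g) = u"
      using K' g c by (simp add: inv_simps flip: PK_simps)
  next
    fix h assume h: "iso C h \<and> Dm C h = c \<and> FA Q h = u"
    then have "FA K h = g"
      using K by (intro g_unique) (auto simp: PK_simps)
    then show "h = FA K' g"
      using h by (auto simp: inv_simps)
  qed
qed

section \<open>The graph of a functor\<close>

lemma graph_cat_simps [simp]:
  "Obj (graph_cat C1 C2 \<Phi>) = graph_obj C1 C2 \<Phi>"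
  "Dm (graph_cat C1 C2 \<Phi>) (x, y, f1, f2) = x"
  "Cd (graph_cat C1 C2 \<Phi>) (x, y, f1, f2) = y"
  "Idt (graph_cat C1 C2 \<Phi>) (c1, c2, \<psi>) = ((c1, c2, \<psi>), (c1, c2, \<psi>), Idt C1 c1, Idt C2 c2)"
  "Cmp (graph_cat C1 C2 \<Phi>) (y', z, g1, g2) (x, y, f1, f2) = (x, z, Cmp C1 g1 f1, Cmp C2 g2 f2)"
  "FO graph_p1 (c1, c2, \<psi>) = c1" "FO graph_p2 (c1, c2, \<psi>) = c2"
  "FA graph_p1 (x, y, f1, f2) = f1" "FA graph_p2 (x, y, f1, f2) = f2"
  by (simp_all add: graph_cat_def graph_p1_def graph_p2_def)

lemma graph_obj_iff:
  "(c1, c2, \<psi>) \<in> graph_obj C1 C2 \<Phi> \<longleftrightarrow> c1 \<in> Obj C1 \<and> c2 \<in> Obj C2 \<and>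
     \<psi> \<in> Arr C2 \<and> Dm C2 \<psi> = FO \<Phi> c1 \<and> Cd C2 \<psi> = c2 \<and> iso C2 \<psi>"
  unfolding graph_obj_def hom_def by auto

lemma graph_arr_iff:
  "((c1, c2, \<psi>), (d1, d2, \<chi>), f1, f2) \<in> Arr (graph_cat C1 C2 \<Phi>) \<longleftrightarrow>
     (c1, c2, \<psi>) \<in> graph_obj C1 C2 \<Phi> \<and> (d1, d2, \<chi>) \<in> graph_obj C1 C2 \<Phi> \<and>
     f1 \<in> Arr C1 \<and> Dm C1 f1 = c1 \<and> Cd C1 f1 = d1 \<and> f2 \<in> Arr C2 \<and> Dm C2 f2 = c2 \<and> Cd C2 f2 = d2 \<and>
     Cmp C2 \<chi> (FA \<Phi> f1) = Cmp C2 f2 \<psi>"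
  unfolding graph_cat_def hom_def by auto

lemma graph_arrE:
  assumes "f \<in> Arr (graph_cat C1 C2 \<Phi>)"
  obtains c1 c2 \<psi> d1 d2 \<chi> f1 f2 where "f = ((c1, c2, \<psi>), (d1, d2, \<chi>), f1, f2)"
    and "(c1, c2, \<psi>) \<in> graph_obj C1 C2 \<Phi>" "(d1, d2, \<chi>) \<in> graph_obj C1 C2 \<Phi>"
    and "f1 \<in> Arr C1" "Dm C1 f1 = c1" "Cd C1 f1 = d1" "f2 \<in> Arr C2" "Dm C2 f2 = c2" "Cd C2 f2 = d2"
    and "Cmp C2 \<chi> (FA \<Phi> f1) = Cmp C2 f2 \<psi>"
  using assms prod.collapse graph_arr_iff by metis

lemma graph_Cmp_in_Arr:
  assumes \<Phi>: "functor C1 C2 \<Phi>"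
    and f: "f \<in> Arr (graph_cat C1 C2 \<Phi>)" and g: "g \<in> Arr (graph_cat C1 C2 \<Phi>)"
    and fg: "Cd (graph_cat C1 C2 \<Phi>) f = Dm (graph_cat C1 C2 \<Phi>) g"
  shows "Cmp (graph_cat C1 C2 \<Phi>) g f \<in> Arr (graph_cat C1 C2 \<Phi>)"
proof -
  have C1: "category C1" and C2: "category C2"
    using \<Phi> by (rule functor_dom_category, rule functor_cod_category)
  obtain c1 c2 \<psi> d1 d2 \<chi> f1 f2 where f_def: "f = ((c1, c2, \<psi>), (d1, d2, \<chi>), f1, f2)"
    and "(c1, c2, \<psi>) \<in> graph_obj C1 C2 \<Phi>" "(d1, d2, \<chi>) \<in> graph_obj C1 C2 \<Phi>"
    and "f1 \<in> Arr C1" "Dm C1 f1 = c1" "Cd C1 f1 = d1" "f2 \<in> Arr C2" "Dm C2 f2 = c2" "Cd C2 f2 = d2"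
    and sq1: "Cmp C2 \<chi> (FA \<Phi> f1) = Cmp C2 f2 \<psi>"
    using f by (rule graph_arrE)
  moreover obtain e1 e2 \<omega> g1 g2 where g_def: "g = ((d1, d2, \<chi>), (e1, e2, \<omega>), g1, g2)"
    and "(e1, e2, \<omega>) \<in> graph_obj C1 C2 \<Phi>"
    and "g1 \<in> Arr C1" "Dm C1 g1 = d1" "Cd C1 g1 = e1" "g2 \<in> Arr C2" "Dm C2 g2 = d2" "Cd C2 g2 = e2"
    and sq2: "Cmp C2 \<omega> (FA \<Phi> g1) = Cmp C2 g2 \<chi>"
    using g fg f_def by (elim graph_arrE) simp
  moreover have "Cmp C2 \<omega> (Cmp C2 (FA \<Phi> g1) (FA \<Phi> f1)) = Cmp C2 (Cmp C2 g2 f2) \<psi>"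
    using calculation \<Phi> by (intro comm_square_paste[OF C2 _ _ _ _ _ _ _ _ _ _ _ _ _ sq1 sq2])
      (simp_all add: graph_obj_iff)
  ultimately show ?thesis
    using \<Phi> C1 C2 by (simp add: graph_arr_iff FA_Cmp)
qed

lemma graph_category:
  assumes \<Phi>: "functor C1 C2 \<Phi>"
  shows "category (graph_cat C1 C2 \<Phi>)"
proof -
  have C1: "category C1" and C2: "category C2"
    using \<Phi> by (rule functor_dom_category, rule functor_cod_category)
  let ?G = "graph_cat C1 C2 \<Phi>"
  show ?thesis
    unfolding category_def
  proof (intro conjI ballI impI)
    fix f assume "f \<in> Arr ?G"
    then show "Dm ?G f \<in> Obj ?G" "Cd ?G f \<in> Obj ?G"
      "Cmp ?G f (Idt ?G (Dm ?G f)) = f" "Cmp ?G (Idt ?G (Cd ?G f)) f = f"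
      using C1 C2 by (auto elim!: graph_arrE simp: graph_arr_iff)
  next
    fix x assume x: "x \<in> Obj ?G"
    obtain c1 c2 \<psi> where "x = (c1, c2, \<psi>)"
      using prod_cases3 .
    then show "Idt ?G x \<in> Arr ?G" "Dm ?G (Idt ?G x) = x" "Cd ?G (Idt ?G x) = x"
      using x C1 C2 \<Phi> by (auto simp: graph_arr_iff graph_obj_iff)
  next
    fix f g assume "f \<in> Arr ?G" "g \<in> Arr ?G" "Cd ?G f = Dm ?G g"
    then show "Cmp ?G g f \<in> Arr ?G" "Dm ?G (Cmp ?G g f) = Dm ?G f" "Cd ?G (Cmp ?G g f) = Cd ?G g"
      using graph_Cmp_in_Arr[OF \<Phi>] by (auto elim!: graph_arrE)
  next
    fix f g h assume "f \<in> Arr ?G" "g \<in> Arr ?G" "h \<in> Arr ?G" "Cd ?G f = Dm ?G g" "Cd ?G g = Dm ?G h"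
    then show "Cmp ?G h (Cmp ?G g f) = Cmp ?G (Cmp ?G h g) f"
      using C1 C2 by (auto elim!: graph_arrE simp: graph_arr_iff Cmp_assoc)
  qed
qed

lemma graph_iso_if_components_iso:
  assumes \<Phi>: "functor C1 C2 \<Phi>" and f: "((c1, c2, \<psi>), (d1, d2, \<chi>), f1, f2) \<in> Arr (graph_cat C1 C2 \<Phi>)"
    and iso: "iso C1 f1" "iso C2 f2"
  shows "iso (graph_cat C1 C2 \<Phi>) ((c1, c2, \<psi>), (d1, d2, \<chi>), f1, f2)"
proof -
  have C1: "category C1" and C2: "category C2"
    using \<Phi> by (rule functor_dom_category, rule functor_cod_category)
  note f_facts = f[unfolded graph_arr_iff graph_obj_iff]
  have "Cmp C2 \<psi> (inv_arr C2 (FA \<Phi> f1)) = Cmp C2 (inv_arr C2 f2) \<chi>"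
    using f_facts \<Phi> iso by (intro comm_square_inv[OF C2]) simp_all
  then have "((d1, d2, \<chi>), (c1, c2, \<psi>), inv_arr C1 f1, inv_arr C2 f2) \<in> Arr (graph_cat C1 C2 \<Phi>)"
    using f_facts \<Phi> iso by (simp add: graph_arr_iff graph_obj_iff functor_inv_arr)
  then show ?thesis
    unfolding iso_def[of _ "((c1, c2, \<psi>), (d1, d2, \<chi>), f1, f2)"] using f f_facts C1 C2 iso
    by (intro conjI bexI) simp_all
qed

lemma graph_arr_eqI:
  assumes \<Phi>: "functor C1 C2 \<Phi>"
    and f: "f \<in> Arr (graph_cat C1 C2 \<Phi>)" and g: "g \<in> Arr (graph_cat C1 C2 \<Phi>)"
    and dm: "Dm (graph_cat C1 C2 \<Phi>) f = Dm (graph_cat C1 C2 \<Phi>) g"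
    and p1: "FA graph_p1 f = FA graph_p1 g" and p2: "FA graph_p2 f = FA graph_p2 g"
    and iso: "iso C1 (FA graph_p1 f)"
  shows "f = g"
proof -
  obtain c1 c2 \<psi> d1 d2 \<chi> f1 f2 where f_def: "f = ((c1, c2, \<psi>), (d1, d2, \<chi>), f1, f2)"
    and "(c1, c2, \<psi>) \<in> graph_obj C1 C2 \<Phi>" and \<chi>: "(d1, d2, \<chi>) \<in> graph_obj C1 C2 \<Phi>"
    and "f1 \<in> Arr C1" "Dm C1 f1 = c1" and f1: "Cd C1 f1 = d1"
    and "f2 \<in> Arr C2" "Dm C2 f2 = c2" "Cd C2 f2 = d2"
    and sq: "Cmp C2 \<chi> (FA \<Phi> f1) = Cmp C2 f2 \<psi>"
    using f by (rule graph_arrE)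
  moreover obtain \<chi>' where g_def: "g = ((c1, c2, \<psi>), (d1, d2, \<chi>'), f1, f2)"
    and \<chi>': "(d1, d2, \<chi>') \<in> graph_obj C1 C2 \<Phi>" and sq': "Cmp C2 \<chi>' (FA \<Phi> f1) = Cmp C2 f2 \<psi>"
    using g dm p1 p2 calculation by (elim graph_arrE) auto
  moreover have "\<chi> = \<chi>'"
  proof (rule iso_cancel_right[OF functor_cod_category[OF \<Phi>]])
    show "iso C2 (FA \<Phi> f1)" "Cmp C2 \<chi> (FA \<Phi> f1) = Cmp C2 \<chi>' (FA \<Phi> f1)"
      using \<Phi> iso sq sq' by (simp_all add: f_def)
  qed (use \<Phi> iso f1 \<chi> \<chi>' in \<open>simp_all add: f_def graph_obj_iff\<close>)
  ultimately show ?thesis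
    by simp
qed

lemma graph_unique_iso_lifting:
  assumes \<Phi>: "functor C1 C2 \<Phi>"
  shows "unique_iso_lifting (graph_cat C1 C2 \<Phi>) (product_cat C1 C2) (pair_ftr graph_p1 graph_p2)"
  unfolding unique_iso_lifting_pair_iff
proof (intro ballI allI impI)
  have C1: "category C1" and C2: "category C2"
    using \<Phi> by (rule functor_dom_category, rule functor_cod_category)
  fix x u1 u2
  assume x: "x \<in> Obj (graph_cat C1 C2 \<Phi>)"
    and u: "iso C1 u1 \<and> iso C2 u2 \<and> Dm C1 u1 = FO graph_p1 x \<and> Dm C2 u2 = FO graph_p2 x"
  obtain c1 c2 \<psi> where x_def: "x = (c1, c2, \<psi>)"
    using prod_cases3 .
  have \<psi>: "\<psi> \<in> Arr C2" "Dm C2 \<psi> = FO \<Phi> c1" "Cd C2 \<psi> = c2" "iso C2 \<psi>"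
    and c: "c1 \<in> Obj C1" "c2 \<in> Obj C2"
    using x by (simp_all add: x_def graph_obj_iff)
  have u: "iso C1 u1" "iso C2 u2" "Dm C1 u1 = c1" "Dm C2 u2 = c2"
    using u by (simp_all add: x_def)
  have Phi_u1: "iso C2 (FA \<Phi> u1)" "Dm C2 (FA \<Phi> u1) = FO \<Phi> c1" "Cd C2 (FA \<Phi> u1) = FO \<Phi> (Cd C1 u1)"
    using \<Phi> u by simp_all
  \<comment> \<open>forced by the commutativity condition on arrows of the graph\<close>
  define \<chi> where "\<chi> = Cmp C2 (Cmp C2 u2 \<psi>) (inv_arr C2 (FA \<Phi> u1))"
  define h where "h = (x, (Cd C1 u1, Cd C2 u2, \<chi>), u1, u2)"
  have \<chi>: "\<chi> \<in> Arr C2" "Dm C2 \<chi> = FO \<Phi> (Cd C1 u1)" "Cd C2 \<chi> = Cd C2 u2" "iso C2 \<chi>"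
    unfolding \<chi>_def using C2 \<psi> u Phi_u1 by (simp_all add: iso_Cmp)
  have square: "Cmp C2 \<chi> (FA \<Phi> u1) = Cmp C2 u2 \<psi>"
    unfolding \<chi>_def using C2 \<psi> u Phi_u1 by simp
  have h_arr: "h \<in> Arr (graph_cat C1 C2 \<Phi>)"
    unfolding h_def using C1 C2 \<psi> c u \<chi> square by (simp add: x_def graph_arr_iff graph_obj_iff)
  show "\<exists>!h. iso (graph_cat C1 C2 \<Phi>) h \<and> Dm (graph_cat C1 C2 \<Phi>) h = x \<and>
      FA graph_p1 h = u1 \<and> FA graph_p2 h = u2"
  proof
    show "iso (graph_cat C1 C2 \<Phi>) h \<and> Dm (graph_cat C1 C2 \<Phi>) h = x \<and>
        FA graph_p1 h = u1 \<and> FA graph_p2 h = u2"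
      using graph_iso_if_components_iso[OF \<Phi>] h_arr u by (simp add: h_def x_def)
  next
    fix h' assume "iso (graph_cat C1 C2 \<Phi>) h' \<and> Dm (graph_cat C1 C2 \<Phi>) h' = x \<and>
      FA graph_p1 h' = u1 \<and> FA graph_p2 h' = u2"
    then show "h' = h"
      using h_arr u by (intro graph_arr_eqI[OF \<Phi>]) (simp_all add: h_def)
  qed
qed

lemma unique_iso_lifting_if_admissible:
  assumes "admissible C1 C2 C12 F G"
  shows "unique_iso_lifting C12 (product_cat C1 C2) (pair_ftr F G)"
proof -
  obtain \<Phi> K K' where \<Phi>: "functor C1 C2 \<Phi>" and K: "functor C12 (graph_cat C1 C2 \<Phi>) K"
    and K': "functor (graph_cat C1 C2 \<Phi>) C12 K'"
    and inv: "feq C12 (fcomp K' K) fid" "feq (graph_cat C1 C2 \<Phi>) (fcomp K K') fid"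
    and legs: "feq C12 (fcomp graph_p1 K) F" "feq C12 (fcomp graph_p2 K) G"
    using assms unfolding admissible_def corr_iso_def by blast
  have "feq C12 (fcomp (pair_ftr graph_p1 graph_p2) K) (pair_ftr F G)"
    using legs unfolding feq_def pair_ftr_def by simp
  then show ?thesis
    using unique_iso_lifting_transfer[OF K K' inv] graph_unique_iso_lifting[OF \<Phi>] by blast
qed

section \<open>The comparison functor\<close>

locale equivalence_correspondence =
  fixes C1 :: "('o1, 'a1) cat" and C2 :: "('o2, 'a2) cat" and C12 :: "('o, 'a) cat"
    and F :: "('o, 'a, 'o1, 'a1) ftr" and G :: "('o, 'a, 'o2, 'a2) ftr"
    and Finv :: "('o1, 'a1, 'o, 'a) ftr" and \<eta> :: "'o \<Rightarrow> 'a" and \<epsilon> :: "'o1 \<Rightarrow> 'a1"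
  assumes G: "functor C12 C2 G" and qi: "quasi_inverse C12 C1 F Finv \<eta> \<epsilon>"
begin

lemmas F = quasi_inverse_functor(1)[OF qi]
  and Finv = quasi_inverse_functor(2)[OF qi]
  and \<eta> = quasi_inverse_unit[OF qi]
  and \<epsilon> = quasi_inverse_unit[OF quasi_inverse_sym[OF qi]]

lemma categories: "category C1" "category C2" "category C12"
  using F G by (auto intro: functor_dom_category functor_cod_category)

lemma G_unit:
  assumes "c \<in> Obj C12"
  shows "FA G (\<eta> c) \<in> Arr C2" "Dm C2 (FA G (\<eta> c)) = FO G (FO Finv (FO F c))"
    "Cd C2 (FA G (\<eta> c)) = FO G c" "iso C2 (FA G (\<eta> c))"
  using assms G \<eta> F Finv by simp_all

lemma G_unit_natural:
  assumes f: "f \<in> Arr C12"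
  shows "Cmp C2 (FA G (\<eta> (Cd C12 f))) (FA G (FA Finv (FA F f))) =
    Cmp C2 (FA G f) (FA G (\<eta> (Dm C12 f)))"
  using f quasi_inverse_unit_natural[OF qi f] categories G F Finv \<eta> by (simp flip: FA_Cmp)

definition comparison_obj :: "'o \<Rightarrow> 'o1 \<times> 'o2 \<times> 'a2" where
  "comparison_obj c = (FO F c, FO G c, FA G (\<eta> c))"

definition comparison where
  "comparison = \<lparr>FO = comparison_obj,
     FA = \<lambda>f. (comparison_obj (Dm C12 f), comparison_obj (Cd C12 f), FA F f, FA G f)\<rparr>"

lemma comparison_obj_in_graph: "c \<in> Obj C12 \<Longrightarrow> comparison_obj c \<in> graph_obj C1 C2 (fcomp G Finv)"
  unfolding comparison_obj_def using G_unit F G by (simp add: graph_obj_iff)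

lemma comparison_functor: "functor C12 (graph_cat C1 C2 (fcomp G Finv)) comparison"
  unfolding functor_def
proof (intro conjI ballI impI)
  show "category (graph_cat C1 C2 (fcomp G Finv))"
    using functor_fcomp[OF Finv G] by (rule graph_category)
  fix f assume f: "f \<in> Arr C12"
  then show "FA comparison f \<in> Arr (graph_cat C1 C2 (fcomp G Finv))"
    using comparison_obj_in_graph G_unit_natural categories F G
    by (simp add: comparison_def comparison_obj_def graph_arr_iff)
  fix g assume "g \<in> Arr C12" "Cd C12 f = Dm C12 g"
  then show "FA comparison (Cmp C12 g f) =
      Cmp (graph_cat C1 C2 (fcomp G Finv)) (FA comparison g) (FA comparison f)"
    using f categories F G by (simp add: comparison_def FA_Cmp)
qed (use categories F G comparison_obj_in_graph in
    \<open>simp_all add: comparison_def comparison_obj_def\<close>)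

lemma comparison_faithful: "faithful C12 comparison"
  using quasi_inverse_faithful[OF qi] unfolding faithful_def comparison_def by simp

lemma comparison_full: "full C12 (graph_cat C1 C2 (fcomp G Finv)) comparison"
  unfolding full_def hom_def
proof (intro ballI, elim CollectE conjE)
  fix c d a
  assume c: "c \<in> Obj C12" and d: "d \<in> Obj C12" and a: "a \<in> Arr (graph_cat C1 C2 (fcomp G Finv))"
    and a_dm: "Dm (graph_cat C1 C2 (fcomp G Finv)) a = FO comparison c"
    and a_cd: "Cd (graph_cat C1 C2 (fcomp G Finv)) a = FO comparison d"
  obtain f1 f2 where a_def: "a = (comparison_obj c, comparison_obj d, f1, f2)"
    and f1: "f1 \<in> Arr C1" "Dm C1 f1 = FO F c" "Cd C1 f1 = FO F d"
    and f2: "f2 \<in> Arr C2" "Dm C2 f2 = FO G c" "Cd C2 f2 = FO G d"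
    and square: "Cmp C2 (FA G (\<eta> d)) (FA G (FA Finv f1)) = Cmp C2 f2 (FA G (\<eta> c))"
    using a a_dm a_cd by (elim graph_arrE) (auto simp: comparison_def comparison_obj_def)
  obtain h where h: "h \<in> Arr C12" "Dm C12 h = c" "Cd C12 h = d" "FA F h = f1"
    using quasi_inverse_full[OF qi] c d f1 by (elim fullE)
  have "Cmp C2 (FA G h) (FA G (\<eta> c)) = Cmp C2 f2 (FA G (\<eta> c))"
    using G_unit_natural[OF h(1)] h square by simp
  then have "FA G h = f2"
    by (rule iso_cancel_right[OF categories(2) G_unit(4)[OF c], rotated -1])
      (use G h f2 G_unit[OF c] in simp_all)
  then show "\<exists>f\<in>{f \<in> Arr C12. Dm C12 f = c \<and> Cd C12 f = d}. FA comparison f = a"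
    using h by (auto simp: comparison_def a_def)
qed

lemma admissible_if_bij_comparison_obj:
  assumes bij: "bij_betw comparison_obj (Obj C12) (graph_obj C1 C2 (fcomp G Finv))"
  shows "admissible C1 C2 C12 F G"
proof -
  have obj: "bij_betw (FO comparison) (Obj C12) (Obj (graph_cat C1 C2 (fcomp G Finv)))"
    using bij by (simp add: comparison_def)
  have arr: "bij_betw (FA comparison) (Arr C12) (Arr (graph_cat C1 C2 (fcomp G Finv)))"
    using comparison_functor comparison_full comparison_faithful obj
    by (rule bij_Arr_if_fully_faithful)
  have "feq C12 (fcomp graph_p1 comparison) F" "feq C12 (fcomp graph_p2 comparison) G"
    unfolding feq_def by (simp_all add: comparison_def comparison_obj_def)
  then show ?thesis
    unfolding admissible_def corr_iso_def
    using functor_fcomp[OF Finv G] comparison_functor functor_inv_ftr[OF obj arr comparison_functor]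
      inv_ftr_inverse[OF obj arr]
    by blast
qed

lemma inj_on_comparison_obj:
  assumes lift: "unique_iso_lifting C12 (product_cat C1 C2) (pair_ftr F G)"
  shows "inj_on comparison_obj (Obj C12)"
proof (rule inj_onI)
  fix c c' assume c: "c \<in> Obj C12" and c': "c' \<in> Obj C12"
    and eq: "comparison_obj c = comparison_obj c'"
  then have F_eq: "FO F c' = FO F c" and G_eq: "FO G c' = FO G c"
    and unit_eq: "FA G (\<eta> c') = FA G (\<eta> c)"
    by (simp_all add: comparison_obj_def)
  obtain \<theta> where \<theta>: "\<theta> \<in> Arr C12" "Dm C12 \<theta> = c" "Cd C12 \<theta> = c'" and F\<theta>: "FA F \<theta> = Idt C1 (FO F c)"
    using quasi_inverse_full[OF qi] c c' categories F F_eq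
    by (elim fullE[of C12 C1 F c c' "Idt C1 (FO F c)"]) simp_all
  have "iso C12 \<theta>"
    using F quasi_inverse_full[OF qi] quasi_inverse_faithful[OF qi] \<theta>(1)
    by (rule fully_faithful_reflects_iso) (use F\<theta> c categories F in simp)
  have "Cmp C2 (FA G \<theta>) (FA G (\<eta> c)) = Cmp C2 (Idt C2 (FO G c)) (FA G (\<eta> c))"
    using G_unit_natural[OF \<theta>(1)] \<theta> F\<theta> unit_eq G_unit[OF c] G_unit[OF c'] c categories F Finv G
    by simp
  then have G\<theta>: "FA G \<theta> = Idt C2 (FO G c)"
    by (rule iso_cancel_right[OF categories(2) G_unit(4)[OF c], rotated -1])
      (use G \<theta> c G_eq G_unit[OF c] categories in simp_all)
  \<comment> \<open>both \<open>\<theta>\<close> and the identity of \<open>c\<close> lift the identity of \<open>(F c, G c)\<close>\<close>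
  have "\<exists>!h. iso C12 h \<and> Dm C12 h = c \<and> FA F h = Idt C1 (FO F c) \<and> FA G h = Idt C2 (FO G c)"
    using lift c categories F G unfolding unique_iso_lifting_pair_iff by simp
  then have "\<theta> = Idt C12 c"
    using \<open>iso C12 \<theta>\<close> \<theta> F\<theta> G\<theta> c categories F G by (metis iso_Idt Dm_Idt FA_Idt)
  then show "c = c'"
    using \<theta> c categories by simp
qed

lemma comparison_obj_onto:
  assumes lift: "unique_iso_lifting C12 (product_cat C1 C2) (pair_ftr F G)"
    and t: "t \<in> graph_obj C1 C2 (fcomp G Finv)"
  shows "t \<in> comparison_obj ` Obj C12"
proof -
  obtain c1 c2 \<psi> where t_def: "t = (c1, c2, \<psi>)"
    using prod_cases3 .
  have c1: "c1 \<in> Obj C1" and c2: "c2 \<in> Obj C2"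
    and \<psi>: "\<psi> \<in> Arr C2" "Dm C2 \<psi> = FO G (FO Finv c1)" "Cd C2 \<psi> = c2" "iso C2 \<psi>"
    using t by (simp_all add: t_def graph_obj_iff)
  define c0 where "c0 = FO Finv c1"
  have c0: "c0 \<in> Obj C12"
    unfolding c0_def using Finv c1 by simp
  \<comment> \<open>lift \<open>(\<epsilon> c1, u2)\<close> from \<open>c0\<close>, with \<open>u2\<close> chosen so that the target \<open>c\<close> has \<open>G (\<eta> c) = \<psi>\<close>\<close>
  define k where "k = FA G (FA Finv (\<epsilon> c1))"
  have k: "k \<in> Arr C2" "Dm C2 k = FO G (FO Finv (FO F c0))" "Cd C2 k = FO G c0" "iso C2 k"
    unfolding k_def c0_def using \<epsilon>[OF c1] G Finv by simp_all
  define u2 where "u2 = Cmp C2 (Cmp C2 \<psi> k) (inv_arr C2 (FA G (\<eta> c0)))"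
  have u2: "iso C2 u2" "Dm C2 u2 = FO G c0" "Cd C2 u2 = c2"
    unfolding u2_def using categories \<psi> k G_unit[OF c0] by (simp_all add: iso_Cmp c0_def)
  have "\<exists>!h. iso C12 h \<and> Dm C12 h = c0 \<and> FA F h = \<epsilon> c1 \<and> FA G h = u2"
    using lift c0 \<epsilon>[OF c1] u2 unfolding unique_iso_lifting_pair_iff by (simp add: c0_def)
  then obtain h where h: "iso C12 h" "Dm C12 h = c0" "FA F h = \<epsilon> c1" "FA G h = u2"
    by blast
  define c where "c = Cd C12 h"
  have c: "c \<in> Obj C12" "FO F c = c1" "FO G c = c2"
    unfolding c_def using h categories \<epsilon>[OF c1] u2 by (simp_all flip: Cd_FA[OF F] Cd_FA[OF G])
  have "Cmp C2 (FA G (\<eta> c)) k = Cmp C2 u2 (FA G (\<eta> c0))"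
    using G_unit_natural[of h] h unfolding c_def k_def by simp
  also have "\<dots> = Cmp C2 \<psi> k"
    unfolding u2_def using categories \<psi> k G_unit[OF c0] by (simp add: c0_def)
  finally have "FA G (\<eta> c) = \<psi>"
    by (rule iso_cancel_right[OF categories(2) k(4), rotated -1])
      (use G_unit[OF c(1)] c \<psi> k in \<open>simp_all add: c0_def\<close>)
  then show ?thesis
    using c by (auto simp: t_def comparison_obj_def)
qed

lemma bij_comparison_obj_if_unique_iso_lifting:
  assumes "unique_iso_lifting C12 (product_cat C1 C2) (pair_ftr F G)"
  shows "bij_betw comparison_obj (Obj C12) (graph_obj C1 C2 (fcomp G Finv))"
  unfolding bij_betw_def
  using assms inj_on_comparison_obj comparison_obj_in_graph comparison_obj_onto by blast

end

theorem lemma4p6p5: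
  fixes C1 :: "('o1, 'a1) cat" and C2 :: "('o2, 'a2) cat" and C12 :: "('o, 'a) cat"
    and F :: "('o, 'a, 'o1, 'a1) ftr" and G :: "('o, 'a, 'o2, 'a2) ftr"
    and Finv :: "('o1, 'a1, 'o, 'a) ftr" and \<eta> :: "'o \<Rightarrow> 'a" and \<epsilon> :: "'o1 \<Rightarrow> 'a1"
  assumes F: "functor C12 C1 F" and G: "functor C12 C2 G"
    and equiv: "equivalence C12 C1 F"
    and qi: "quasi_inverse C12 C1 F Finv \<eta> \<epsilon>"
  shows "(admissible C1 C2 C12 F G \<longleftrightarrow>
           bij_betw (\<lambda>c. (FO F c, FO G c, FA G (\<eta> c))) (Obj C12)
             {(c1, c2, \<psi>). c1 \<in> Obj C1 \<and> c2 \<in> Obj C2 \<and>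
                \<psi> \<in> hom C2 (FO G (FO Finv c1)) c2 \<and> iso C2 \<psi>})
       \<and> (admissible C1 C2 C12 F G \<longleftrightarrow>
           (\<forall>c\<in>Obj C12. \<forall>u. iso (product_cat C1 C2) u \<and>
               Dm (product_cat C1 C2) u = FO (pair_ftr F G) c \<longrightarrow>
              (\<exists>!h. iso C12 h \<and> Dm C12 h = c \<and> FA (pair_ftr F G) h = u)))"
proof -
  \<comment> \<open>\<open>F\<close> and \<open>equiv\<close> are implied by \<open>qi\<close>\<close>
  interpret equivalence_correspondence C1 C2 C12 F G Finv \<eta> \<epsilon>
    using G qi by unfold_locales
  have b_iff: "bij_betw (\<lambda>c. (FO F c, FO G c, FA G (\<eta> c))) (Obj C12)
      {(c1, c2, \<psi>). c1 \<in> Obj C1 \<and> c2 \<in> Obj C2 \<and> \<psi> \<in> hom C2 (FO G (FO Finv c1)) c2 \<and> iso C2 \<psi>}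
    \<longleftrightarrow> bij_betw comparison_obj (Obj C12) (graph_obj C1 C2 (fcomp G Finv))"
    by (simp add: comparison_obj_def[abs_def] graph_obj_def)
  have "admissible C1 C2 C12 F G \<Longrightarrow> unique_iso_lifting C12 (product_cat C1 C2) (pair_ftr F G)"
    by (rule unique_iso_lifting_if_admissible)
  moreover have "unique_iso_lifting C12 (product_cat C1 C2) (pair_ftr F G) \<Longrightarrow>
      bij_betw comparison_obj (Obj C12) (graph_obj C1 C2 (fcomp G Finv))"
    by (rule bij_comparison_obj_if_unique_iso_lifting)
  moreover have "bij_betw comparison_obj (Obj C12) (graph_obj C1 C2 (fcomp G Finv)) \<Longrightarrow>
      admissible C1 C2 C12 F G"
    by (rule admissible_if_bij_comparison_obj)
  ultimately show ?thesis
    unfolding b_iff unique_iso_lifting_def[symmetric] by blast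
qed

end
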